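(* Let $N\ge1$, $R>0$, and for $i=1,\dots,N$ let $D_i>0$, $b_i>0$, $a_i\in\mathbb{R}$. Let $c_i(q):=-\dfrac{a_i}{b_i}-\dfrac{1}{b_i}\big[\ln(1-q)-\ln q\big]$ for $q\in(0,1)$, and for $\bm q\in(0,1)^N$ define $$g'(\bm q):=\sum_{i=1}^N\big(R D_i q_i c_i(q_i)-D_i q_i\big).$$ For $\lambda\in(0,\infty)$ define $$q_i(\lambda):=\frac{W\big(\exp(a_i+\frac{b_i}{\lambda R}+\frac{b_i}{R}-1)\big)}{W\big(\exp(a_i+\frac{b_i}{\lambda R}+\frac{b_i}{R}-1)\big)+1},\qquad g'(\lambda):=g'\big(q_1(\lambda),\dots,q_N(\lambda)\big).$$ Then $g'(\bm q)$ is strongly convex on $(0,1)^N$; $g'(\lambda)$ is strictly decreasing on $(0,\infty)$; and $\lim_{\lambda\to0^+}g'(\lambda)>0$.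
   Context: $W$ denotes the Lambert $W$ function on $(0,\infty)$: the inverse of $x\mapsto xe^x$ on $(0,\infty)$. $R$ is a lower bound on return on investment; $g'$ is the ROI-constraint function. *)

theory Defs
  imports "HOL-Analysis.Analysis"
begin

definition lambertW :: "real \<Rightarrow> real" where
  "lambertW y = (THE x. 0 < x \<and> x * exp x = y)"

definition strongly_convex_on :: "'a::real_normed_vector set \<Rightarrow> ('a \<Rightarrow> real) \<Rightarrow> bool" where
  "strongly_convex_on S f \<longleftrightarrow> convex S \<and> (\<exists>m>0. \<forall>x\<in>S. \<forall>y\<in>S. \<forall>t\<in>{0..1}.
     f (t *\<^sub>R x + (1 - t) *\<^sub>R y) \<le> t * f x + (1 - t) * f y - m / 2 * t * (1 - t) * (norm (x - y))\<^sup>2)"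

definition cfun :: "real \<Rightarrow> real \<Rightarrow> real \<Rightarrow> real" where
  "cfun a b q = - a / b - (1 / b) * (ln (1 - q) - ln q)"

definition gq :: "real \<Rightarrow> real^'n \<Rightarrow> real^'n \<Rightarrow> real^'n \<Rightarrow> real^'n \<Rightarrow> real" where
  "gq R D a b q = (\<Sum>i\<in>UNIV. R * D$i * q$i * cfun (a$i) (b$i) (q$i) - D$i * q$i)"

definition qlam :: "real \<Rightarrow> real \<Rightarrow> real \<Rightarrow> real \<Rightarrow> real" where
  "qlam R a b lam = (let w = lambertW (exp (a + b / (lam * R) + b / R - 1)) in w / (w + 1))"

definition glam :: "real \<Rightarrow> real^'n \<Rightarrow> real^'n \<Rightarrow> real^'n \<Rightarrow> real \<Rightarrow> real" where
  "glam R D a b lam = gq R D a b (\<chi> i. qlam R (a$i) (b$i) lam)"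

end

theory Submission
  imports Defs "HOL-Real_Asymp.Real_Asymp"
begin

text \<open>
  Each summand of \<open>g'\<close> depends on one coordinate only and is a linear function plus
  \<open>R D\<^sub>i / b\<^sub>i\<close> times \<open>q ln (q / (1 - q))\<close>, whose second derivative exceeds \<open>1/q > 1\<close> on
  \<open>(0, 1)\<close>; hence \<open>g'\<close> is strongly convex with modulus \<open>min\<^sub>i R D\<^sub>i / b\<^sub>i\<close>.

  Along the curve \<open>q\<^sub>i(\<lambda>)\<close> put \<open>w = W(exp z)\<close> with \<open>z = a\<^sub>i + b\<^sub>i/(\<lambda> R) + b\<^sub>i/R - 1\<close>. Then
  \<open>q\<^sub>i(\<lambda>) = w/(w + 1)\<close>, \<open>ln w + w = z\<close>, and the summand becomes
  \<open>D\<^sub>i w/(w + 1) ((R/b\<^sub>i)(ln w - a\<^sub>i) - 1)\<close>, a function of \<open>w\<close> whose derivative has the sign of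
  \<open>ln w + w + 1 - a\<^sub>i - b\<^sub>i/R\<close>. On the curve \<open>ln w + w = z > a\<^sub>i + b\<^sub>i/R - 1\<close>, so the summand
  increases with \<open>w\<close>. As \<open>\<lambda>\<close> grows, \<open>z\<close> and hence \<open>w\<close> decrease, so \<open>g'(\<lambda>)\<close> strictly
  decreases; as \<open>\<lambda> \<rightarrow> 0\<^sup>+\<close>, \<open>z\<close>, \<open>w\<close> and every summand tend to \<open>+\<infinity>\<close>.
\<close>

lemma lambertW_unique:
  fixes y :: real
  assumes "0 < y"
  shows "\<exists>!x. 0 < x \<and> x * exp x = y"
proof -
  have inj: "inj_on (\<lambda>x::real. x * exp x) {0..}"
  proof (rule strict_mono_on_imp_inj_on, rule strict_mono_onI)
    fix u v :: real
    assume "u \<in> {0..}" "v \<in> {0..}" "u < v"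
    then show "u * exp u < v * exp v"
      by (intro mult_strict_mono) auto
  qed
  have "\<exists>x. 0 \<le> x \<and> x \<le> y \<and> x * exp x = y"
    using assms by (intro IVT) (auto intro!: continuous_intros)
  then obtain x where x: "0 \<le> x" "x * exp x = y"
    by blast
  with assms have "x \<noteq> 0"
    by auto
  with x have "0 < x"
    by simp
  moreover have "x' = x" if "0 < x'" "x' * exp x' = y" for x'
    using inj_onD[OF inj, of x' x] that x by simp
  ultimately show ?thesis
    using x by blast
qed

lemma lambertW:
  assumes "0 < y"
  shows "0 < lambertW y" and "lambertW y * exp (lambertW y) = y"
proof -
  have "0 < lambertW y \<and> lambertW y * exp (lambertW y) = y"
    unfolding lambertW_def by (rule theI'[OF lambertW_unique[OF assms]])
  then show "0 < lambertW y" and "lambertW y * exp (lambertW y) = y"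
    by simp_all
qed

lemma lambertW_exp_pos: "0 < lambertW (exp z)"
  by (simp add: lambertW)

lemma ln_lambertW_exp: "ln (lambertW (exp z)) + lambertW (exp z) = z"
proof -
  have "z = ln (lambertW (exp z) * exp (lambertW (exp z)))"
    by (simp add: lambertW)
  then show ?thesis
    by (simp add: ln_mult_pos lambertW_exp_pos)
qed

lemma strict_mono_lambertW_exp: "strict_mono (\<lambda>z. lambertW (exp z))"
proof (rule strict_monoI)
  fix z1 z2 :: real
  assume "z1 < z2"
  show "lambertW (exp z1) < lambertW (exp z2)"
  proof (rule ccontr)
    assume "\<not> lambertW (exp z1) < lambertW (exp z2)"
    then have "ln (lambertW (exp z2)) \<le> ln (lambertW (exp z1))"
      by (simp add: lambertW_exp_pos)
    with \<open>\<not> lambertW (exp z1) < lambertW (exp z2)\<close> \<open>z1 < z2\<close> show False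
      using ln_lambertW_exp[of z1] ln_lambertW_exp[of z2] by linarith
  qed
qed

lemma filterlim_lambertW_exp_at_top: "filterlim (\<lambda>z. lambertW (exp z)) at_top at_top"
proof (rule filterlim_at_top_mono)
  show "filterlim (\<lambda>z::real. (z + 1) / 2) at_top at_top"
    by real_asymp
  have "z + 1 \<le> 2 * lambertW (exp z)" for z
    using ln_lambertW_exp[of z] ln_le_minus_one[OF lambertW_exp_pos[of z]] by linarith
  then show "\<forall>\<^sub>F z in at_top. (z + 1) / 2 \<le> lambertW (exp z)"
    by (simp add: always_eventually field_simps)
qed

definition roi_term :: "real \<Rightarrow> real \<Rightarrow> real \<Rightarrow> real \<Rightarrow> real \<Rightarrow> real" where
  "roi_term R D a b q = R * D * q * cfun a b q - D * q"

lemma gq_eq_sum_roi_term: "gq R D a b q = (\<Sum>i\<in>UNIV. roi_term R (D$i) (a$i) (b$i) (q$i))"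
  unfolding gq_def roi_term_def ..

lemma glam_eq_sum_roi_term:
  "glam R D a b lam = (\<Sum>i\<in>UNIV. roi_term R (D$i) (a$i) (b$i) (qlam R (a$i) (b$i) lam))"
  unfolding glam_def gq_eq_sum_roi_term by simp

lemma strongly_convex_onI:
  fixes f :: "'a::real_inner \<Rightarrow> real"
  assumes "0 < m" and "convex_on S (\<lambda>x. f x - m / 2 * (norm x)\<^sup>2)"
  shows "strongly_convex_on S f"
  unfolding strongly_convex_on_def
proof (intro conjI exI[of _ m] ballI assms(1))
  show "convex S"
    using assms(2) by (rule convex_on_imp_convex)
  fix x y t
  assume "x \<in> S" "y \<in> S" "t \<in> {0..1::real}"
  define z where "z = t *\<^sub>R x + (1 - t) *\<^sub>R y"
  have convex_ineq: "f z - m / 2 * (norm z)\<^sup>2 \<le> t * (f x - m / 2 * (norm x)\<^sup>2) + (1 - t) * (f y - m / 2 * (norm y)\<^sup>2)"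
    using convex_onD[OF assms(2), of "1 - t" x y] \<open>x \<in> S\<close> \<open>y \<in> S\<close> \<open>t \<in> {0..1}\<close>
    by (simp add: z_def)
  have norm_z: "(norm z)\<^sup>2 = t * (norm x)\<^sup>2 + (1 - t) * (norm y)\<^sup>2 - t * (1 - t) * (norm (x - y))\<^sup>2"
    unfolding z_def by (simp add: power2_norm_eq_inner inner_simps algebra_simps)
  show "f z \<le> t * f x + (1 - t) * f y - m / 2 * t * (1 - t) * (norm (x - y))\<^sup>2"
    using convex_ineq unfolding norm_z by (simp add: field_simps)
qed

lemma convex_on_coordinatewise_sum:
  fixes f :: "'n::finite \<Rightarrow> real \<Rightarrow> real"
  assumes "\<And>i. convex_on I (f i)"
  shows "convex_on {x::real^'n. \<forall>i. x$i \<in> I} (\<lambda>x. \<Sum>i\<in>UNIV. f i (x$i))"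
proof (rule convex_onI)
  show "convex {x::real^'n. \<forall>i. x$i \<in> I}"
    using convex_on_imp_convex[OF assms] by (intro convex_box_cart) simp
  fix x y :: "real^'n" and t :: real
  assume "0 < t" "t < 1" "x \<in> {x. \<forall>i. x$i \<in> I}" "y \<in> {x. \<forall>i. x$i \<in> I}"
  then have "f i ((1 - t) * x$i + t * y$i) \<le> (1 - t) * f i (x$i) + t * f i (y$i)" for i
    using convex_onD[OF assms, of t "x$i" "y$i"] by simp
  then show "(\<Sum>i\<in>UNIV. f i (((1 - t) *\<^sub>R x + t *\<^sub>R y)$i))
      \<le> (1 - t) * (\<Sum>i\<in>UNIV. f i (x$i)) + t * (\<Sum>i\<in>UNIV. f i (y$i))"
    by (simp add: sum_distrib_left sum_mono flip: sum.distrib)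
qed

lemma norm_vec_power2: "(norm x)\<^sup>2 = (\<Sum>i\<in>UNIV. (x$i)\<^sup>2)" for x :: "real^'n"
  by (simp add: norm_vec_def L2_set_def sum_nonneg)

lemma convex_on_roi_term_minus_square:
  assumes "0 < R" "0 < D" "0 < b" "m \<le> R * D / b"
  shows "convex_on {0<..<1} (\<lambda>q. roi_term R D a b q - m / 2 * q\<^sup>2)"
proof -
  \<comment> \<open>\<open>1/(1 - q) = 1 + q + q\<^sup>2/(1 - q)\<close> splits the derivative into increasing parts\<close>
  define f' where "f' q = R * D / b * (ln q - ln (1 - q) + 1 + q\<^sup>2 / (1 - q))
    + (R * D / b - m) * q - R * D * a / b - D" for q
  show ?thesis
  proof (rule convex_on_realI[where f' = f'])
    show "connected {0<..<1::real}"
      by simp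
    fix q :: real
    assume q: "q \<in> {0<..<1}"
    then have "((\<lambda>q. roi_term R D a b q - m / 2 * q\<^sup>2) has_real_derivative
        R * D * cfun a b q + R * D * q * (- (1 / b) * (- 1 / (1 - q) - 1 / q)) - D - m * q) (at q)"
      unfolding roi_term_def cfun_def using assms by (auto intro!: derivative_eq_intros)
    moreover have "R * D * cfun a b q + R * D * q * (- (1 / b) * (- 1 / (1 - q) - 1 / q)) - D - m * q = f' q"
      using q assms unfolding f'_def cfun_def by (simp add: field_simps power2_eq_square)
    ultimately show "((\<lambda>q. roi_term R D a b q - m / 2 * q\<^sup>2) has_real_derivative f' q) (at q)"
      by simp
  next
    fix x y :: real
    assume xy: "x \<in> {0<..<1}" "y \<in> {0<..<1}" "x \<le> y"
    have "ln x \<le> ln y" "ln (1 - y) \<le> ln (1 - x)"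
      using xy by auto
    moreover have "x\<^sup>2 / (1 - x) \<le> y\<^sup>2 / (1 - y)"
      using xy by (intro frac_le power_mono) auto
    ultimately have "R * D / b * (ln x - ln (1 - x) + 1 + x\<^sup>2 / (1 - x))
        \<le> R * D / b * (ln y - ln (1 - y) + 1 + y\<^sup>2 / (1 - y))"
      using assms by (intro mult_left_mono) auto
    moreover have "(R * D / b - m) * x \<le> (R * D / b - m) * y"
      using xy assms by (intro mult_left_mono) auto
    ultimately show "f' x \<le> f' y"
      unfolding f'_def by linarith
  qed
qed

lemma gq_strongly_convex:
  fixes R :: real and D a b :: "real^'n"
  assumes "0 < R" "\<forall>i. 0 < D$i" "\<forall>i. 0 < b$i"
  shows "strongly_convex_on {q. \<forall>i. 0 < q$i \<and> q$i < 1} (gq R D a b)"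
proof (rule strongly_convex_onI)
  define m where "m = Min (range (\<lambda>i. R * D$i / b$i))"
  show "0 < m"
    unfolding m_def using assms by (subst Min_gr_iff) auto
  have "m \<le> R * D$i / b$i" for i
    unfolding m_def by (rule Min_le) auto
  then have "convex_on {q::real^'n. \<forall>i. q$i \<in> {0<..<1}}
      (\<lambda>q. \<Sum>i\<in>UNIV. roi_term R (D$i) (a$i) (b$i) (q$i) - m / 2 * (q$i)\<^sup>2)"
    using assms by (intro convex_on_coordinatewise_sum convex_on_roi_term_minus_square) auto
  then show "convex_on {q. \<forall>i. 0 < q$i \<and> q$i < 1} (\<lambda>q. gq R D a b q - m / 2 * (norm q)\<^sup>2)"
    by (simp add: gq_eq_sum_roi_term norm_vec_power2 sum_subtractf sum_distrib_left)
qed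

lemma roi_term_odds:
  assumes "0 < w"
  shows "roi_term R D a b (w / (w + 1)) = D * (w / (w + 1)) * (R / b * (ln w - a) - 1)"
proof -
  have "ln (1 - w / (w + 1)) - ln (w / (w + 1)) = - ln w"
    using assms by (simp add: field_simps ln_div)
  then have cfun_odds: "cfun a b (w / (w + 1)) = (ln w - a) / b"
    unfolding cfun_def by (simp add: diff_divide_distrib)
  show ?thesis
    unfolding roi_term_def cfun_odds by (simp add: divide_inverse algebra_simps)
qed

lemma roi_term_odds_strict_mono:
  assumes "0 < R" "0 < D" "0 < b" "0 < w1" "w1 < w2"
    and above: "a + b / R - 1 < ln w1 + w1"
  shows "roi_term R D a b (w1 / (w1 + 1)) < roi_term R D a b (w2 / (w2 + 1))"
proof -
  define \<phi> where "\<phi> w = D * (w / (w + 1)) * (R / b * (ln w - a) - 1)" for w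
  have "\<phi> w1 < \<phi> w2"
  proof (rule DERIV_pos_imp_increasing[OF \<open>w1 < w2\<close>])
    fix x
    assume x: "w1 \<le> x" "x \<le> w2"
    with assms have "0 < x" "ln w1 \<le> ln x"
      by auto
    have "(\<phi> has_real_derivative D / (x + 1)\<^sup>2 * (R / b * (ln x + x + 1 - a) - 1)) (at x)"
      unfolding \<phi>_def using \<open>0 < x\<close> assms
      by (auto intro!: derivative_eq_intros simp: divide_simps power2_eq_square)
         (simp add: algebra_simps)
    moreover have "b / R < ln x + x + 1 - a"
      using x above \<open>ln w1 \<le> ln x\<close> by linarith
    then have "1 < R / b * (ln x + x + 1 - a)"
      using assms by (simp add: field_simps)
    then have "0 < D / (x + 1)\<^sup>2 * (R / b * (ln x + x + 1 - a) - 1)"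
      using assms \<open>0 < x\<close> by (intro mult_pos_pos) auto
    ultimately show "\<exists>y. (\<phi> has_real_derivative y) (at x) \<and> 0 < y"
      by blast
  qed
  then show ?thesis
    using assms by (simp add: roi_term_odds \<phi>_def)
qed

lemma filterlim_roi_term_odds_at_top:
  assumes "0 < R" "0 < D" "0 < b"
  shows "filterlim (\<lambda>w. roi_term R D a b (w / (w + 1))) at_top at_top"
proof -
  have "((\<lambda>w::real. w / (w + 1)) \<longlongrightarrow> 1) at_top"
    by real_asymp
  then have lim_factor: "((\<lambda>w. D * (w / (w + 1))) \<longlongrightarrow> D) at_top"
    using tendsto_mult_left by fastforce
  have lim_log: "filterlim (\<lambda>w. (- (R / b * a) - 1) + R / b * ln w) at_top at_top"
    using assms
    by (intro filterlim_tendsto_add_at_top[OF tendsto_const]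
        filterlim_tendsto_pos_mult_at_top[OF tendsto_const _ ln_at_top]) auto
  have lim: "filterlim (\<lambda>w. D * (w / (w + 1)) * ((- (R / b * a) - 1) + R / b * ln w)) at_top at_top"
    using lim_factor \<open>0 < D\<close> lim_log by (rule filterlim_tendsto_pos_mult_at_top)
  have "D * (w / (w + 1)) * ((- (R / b * a) - 1) + R / b * ln w) = roi_term R D a b (w / (w + 1))"
    if "0 < w" for w
    unfolding roi_term_odds[OF that] by (simp add: algebra_simps)
  then have "\<forall>\<^sub>F w in at_top. D * (w / (w + 1)) * ((- (R / b * a) - 1) + R / b * ln w)
      = roi_term R D a b (w / (w + 1))"
    using eventually_gt_at_top[of 0] by (rule eventually_mono[rotated])
  from iffD1[OF filterlim_cong[OF refl refl this] lim] show ?thesis .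
qed

lemma roi_term_qlam_strict_antimono:
  assumes "0 < R" "0 < D" "0 < b"
  shows "strict_antimono_on {0<..} (\<lambda>lam. roi_term R D a b (qlam R a b lam))"
proof (rule monotone_onI)
  define z where "z lam = a + b / (lam * R) + b / R - 1" for lam
  fix l1 l2 :: real
  assume "l1 \<in> {0<..}" "l2 \<in> {0<..}" "l1 < l2"
  define w where "w lam = lambertW (exp (z lam))" for lam
  have qlam_w: "qlam R a b lam = w lam / (w lam + 1)" for lam
    unfolding qlam_def Let_def w_def z_def ..
  from \<open>l1 \<in> {0<..}\<close> \<open>l2 \<in> {0<..}\<close> \<open>l1 < l2\<close> assms have "z l2 < z l1" "a + b / R - 1 < z l2"
    unfolding z_def by (auto intro!: divide_strict_left_mono)
  then show "roi_term R D a b (qlam R a b l2) < roi_term R D a b (qlam R a b l1)"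
    unfolding qlam_w w_def using assms
    by (intro roi_term_odds_strict_mono lambertW_exp_pos strict_monoD[OF strict_mono_lambertW_exp])
       (simp_all add: ln_lambertW_exp)
qed

lemma filterlim_roi_term_qlam_at_top:
  assumes "0 < R" "0 < D" "0 < b"
  shows "filterlim (\<lambda>lam. roi_term R D a b (qlam R a b lam)) at_top (at_right 0)"
proof -
  have "filterlim (\<lambda>lam. a + b / (lam * R) + b / R - 1) at_top (at_right 0)"
    using assms by real_asymp
  then show ?thesis
    unfolding qlam_def Let_def
    by (rule filterlim_compose[OF filterlim_roi_term_odds_at_top[OF assms]
        filterlim_compose[OF filterlim_lambertW_exp_at_top]])
qed

lemma filterlim_sum_at_top:
  fixes f :: "'i \<Rightarrow> 'a \<Rightarrow> real"
  assumes "finite I" "I \<noteq> {}" "\<And>i. i \<in> I \<Longrightarrow> filterlim (f i) at_top F"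
  shows "filterlim (\<lambda>x. \<Sum>i\<in>I. f i x) at_top F"
  using assms by (induction I rule: finite_ne_induct) (auto intro: filterlim_at_top_add_at_top)

lemma glam_strict_antimono:
  fixes R :: real and D a b :: "real^'n"
  assumes "0 < R" "\<forall>i. 0 < D$i" "\<forall>i. 0 < b$i"
  shows "strict_antimono_on {0<..} (glam R D a b)"
proof (rule monotone_onI)
  fix l1 l2 :: real
  assume "l1 \<in> {0<..}" "l2 \<in> {0<..}" "l1 < l2"
  then show "glam R D a b l2 < glam R D a b l1"
    unfolding glam_eq_sum_roi_term using assms
    by (intro sum_strict_mono monotone_onD[OF roi_term_qlam_strict_antimono]) auto
qed

lemma filterlim_glam_at_top:
  fixes R :: real and D a b :: "real^'n"
  assumes "0 < R" "\<forall>i. 0 < D$i" "\<forall>i. 0 < b$i"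
  shows "filterlim (glam R D a b) at_top (at_right 0)"
  unfolding glam_eq_sum_roi_term using assms
  by (intro filterlim_sum_at_top filterlim_roi_term_qlam_at_top) auto

theorem theorem5:
  fixes R :: real and D a b :: "real^'n"
  assumes "R > 0" and "\<forall>i. D$i > 0" and "\<forall>i. b$i > 0"
  shows "strongly_convex_on {q :: real^'n. \<forall>i. 0 < q$i \<and> q$i < 1} (gq R D a b)
       \<and> strict_antimono_on {0<..} (glam R D a b)
       \<and> (\<exists>L::ereal. L > 0 \<and> ((\<lambda>lam. ereal (glam R D a b lam)) \<longlongrightarrow> L) (at_right 0))"
proof (intro conjI)
  show "strongly_convex_on {q. \<forall>i. 0 < q$i \<and> q$i < 1} (gq R D a b)"
    using assms by (rule gq_strongly_convex)
  show "strict_antimono_on {0<..} (glam R D a b)"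
    using assms by (rule glam_strict_antimono)
  show "\<exists>L::ereal. L > 0 \<and> ((\<lambda>lam. ereal (glam R D a b lam)) \<longlongrightarrow> L) (at_right 0)"
    using filterlim_glam_at_top[OF assms]
    by (intro exI[of _ \<infinity>]) (simp add: tendsto_PInfty_eq_at_top)
qed

end
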